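(* Let $\mathbf{A}\in\mathbb{R}^{(\ell m)\times(qn)}$ with $\mathcal{E}=(\mathbf{E}_1,\dots,\mathbf{E}_p)$ and $\mathcal{M}_{\mathcal{E}}$ as in the context, and let $\mathcal{T}=[\![\mathbf{X},\mathbf{Y},\mathbf{Z}]\!]\in\mathbb{R}^{m\times p\times n}$ be a CP tensor approximating $\mathcal{T}_{\mathcal{E}}[\mathbf{A}]$, with $\mathbf{X}\in\mathbb{R}^{m\times r}$, $\mathbf{Y}\in\mathbb{R}^{p\times r}$, $\mathbf{Z}\in\mathbb{R}^{n\times r}$, i.e. $\mathcal{T}_{i,k,j}=\sum_{s=1}^r\mathbf{X}_{is}\mathbf{Y}_{ks}\mathbf{Z}_{js}$. Suppose $\mathbf{Y}=\mathbf{F}\mathbf{G}^\top$ with $\mathbf{F}\in\mathbb{R}^{p\times r}$ and $\mathbf{G}\in\mathbb{R}^{r\times r}$. Then \[\mathcal{M}_{\mathcal{E}}[\mathcal{T}]=\sum_{j=1}^r\Big(\sum_{k=1}^p f_{kj}\mathbf{E}_k\Big)\otimes\big(\mathbf{X}\,\mathrm{diag}(\mathbf{G}_{:,j})\,\mathbf{Z}^\top\big),\] a representation as a sum of Kronecker products of matrices.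
   Context: $\mathbf{A}$ is a block matrix with $\ell\times q$ blocks of size $m\times n$, whose blocks take exactly $p$ distinct values $\mathbf{A}_1,\dots,\mathbf{A}_p\in\mathbb{R}^{m\times n}$, $\mathbf{A}_k$ occurring at $\eta_k\ge1$ block positions. $\mathbf{E}_k\in\mathbb{R}^{\ell\times q}$ has $(i,j)$ entry $1/\sqrt{\eta_k}$ if $\mathbf{A}_k$ is the $(i,j)$ block of $\mathbf{A}$ and $0$ otherwise. $\mathcal{T}_{\mathcal{E}}[\mathbf{A}]\in\mathbb{R}^{m\times p\times n}$ has entries $\sqrt{\eta_k}(\mathbf{A}_k)_{ij}$ at position $(i,k,j)$. For $\mathcal{X}\in\mathbb{R}^{m\times p\times n}$, $\mathrm{sq}(\mathcal{X}_{:,k,:})$ is the $m\times n$ matrix with entries $\mathcal{X}_{i,k,j}$ and $\mathcal{M}_{\mathcal{E}}[\mathcal{X}]=\sum_{k=1}^p\mathbf{E}_k\otimes\mathrm{sq}(\mathcal{X}_{:,k,:})$. The Kronecker product $\mathbf{B}\otimes\mathbf{C}$ has $(i,j)$ block $b_{ij}\mathbf{C}$. $f_{kj}$ are the entries of $\mathbf{F}$, $\mathbf{G}_{:,j}$ is the $j$th column of $\mathbf{G}$, and $\mathrm{diag}(\mathbf{v})$ is the diagonal matrix with diagonal $\mathbf{v}$. *)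

theory Defs
  imports "Jordan_Normal_Form.Matrix"
begin

definition kron :: "real mat \<Rightarrow> real mat \<Rightarrow> real mat" where
  "kron B C = mat (dim_row B * dim_row C) (dim_col B * dim_col C)
     (\<lambda>(i,j). B $$ (i div dim_row C, j div dim_col C) * C $$ (i mod dim_row C, j mod dim_col C))"

definition msum :: "nat \<Rightarrow> nat \<Rightarrow> ('i \<Rightarrow> real mat) \<Rightarrow> 'i set \<Rightarrow> real mat" where
  "msum nr nc f I = mat nr nc (\<lambda>(i,j). \<Sum>k\<in>I. f k $$ (i,j))"

definition blk :: "real mat \<Rightarrow> nat \<Rightarrow> nat \<Rightarrow> nat \<Rightarrow> nat \<Rightarrow> real mat" where
  "blk A m n i j = mat m n (\<lambda>(a,b). A $$ (i * m + a, j * n + b))"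

definition eta :: "real mat \<Rightarrow> nat \<Rightarrow> nat \<Rightarrow> nat \<Rightarrow> nat \<Rightarrow> real mat \<Rightarrow> nat" where
  "eta A l q m n Ak = card {(i,j). i < l \<and> j < q \<and> blk A m n i j = Ak}"

definition Emat :: "real mat \<Rightarrow> nat \<Rightarrow> nat \<Rightarrow> nat \<Rightarrow> nat \<Rightarrow> real mat \<Rightarrow> real mat" where
  "Emat A l q m n Ak = mat l q (\<lambda>(i,j).
     if blk A m n i j = Ak then 1 / sqrt (real (eta A l q m n Ak)) else 0)"

text \<open>Third-order tensors in R^(m x p x n) are represented as functions nat => nat => nat => real
  (only indices below the dimensions matter). sq(X_{:,k,:}) is the m x n frontal slice.\<close>
definition sq_slice :: "nat \<Rightarrow> nat \<Rightarrow> (nat \<Rightarrow> nat \<Rightarrow> nat \<Rightarrow> real) \<Rightarrow> nat \<Rightarrow> real mat" where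
  "sq_slice m n X k = mat m n (\<lambda>(i,j). X i k j)"

text \<open>M_E[X] = sum_k E_k (x) sq(X_{:,k,:}), for the family E_1..E_p (indices 0..p-1).\<close>
definition M_E :: "(nat \<Rightarrow> real mat) \<Rightarrow> nat \<Rightarrow> nat \<Rightarrow> nat \<Rightarrow> nat \<Rightarrow> nat \<Rightarrow>
    (nat \<Rightarrow> nat \<Rightarrow> nat \<Rightarrow> real) \<Rightarrow> real mat" where
  "M_E E p l q m n X = msum (l * m) (q * n) (\<lambda>k. kron (E k) (sq_slice m n X k)) {..<p}"

definition cp_tensor :: "real mat \<Rightarrow> real mat \<Rightarrow> real mat \<Rightarrow> nat \<Rightarrow> nat \<Rightarrow> nat \<Rightarrow> real" where
  "cp_tensor X Y Z i k j = (\<Sum>s<dim_col X. X $$ (i,s) * Y $$ (k,s) * Z $$ (j,s))"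

end

theory Submission
  imports Defs
begin

text \<open>Every frontal slice of the CP tensor [[X,Y,Z]] is X diag(Y_{k,:}) Z^T. Substituting
  Y = F G^T makes diag(Y_{k,:}) the combination \<Sum>_j f_kj diag(G_{:,j}), so the k-th slice is
  \<Sum>_j f_kj P_j with P_j = X diag(G_{:,j}) Z^T. Bilinearity of the Kronecker product then lets
  the coefficients f_kj migrate from the right factor to the left one:
  \<Sum>_k E_k \<otimes> \<Sum>_j f_kj P_j = \<Sum>_j (\<Sum>_k f_kj E_k) \<otimes> P_j.\<close>

lemma msum_carrier [simp]: "msum nr nc f I \<in> carrier_mat nr nc"
  by (simp add: msum_def)

lemma msum_dims [simp]: "dim_row (msum nr nc f I) = nr" "dim_col (msum nr nc f I) = nc"
  by (simp_all add: msum_def)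

lemma index_msum [simp]: "i < nr \<Longrightarrow> j < nc \<Longrightarrow> msum nr nc f I $$ (i, j) = (\<Sum>k\<in>I. f k $$ (i, j))"
  by (simp add: msum_def)

lemma index_kron:
  assumes "B \<in> carrier_mat l q" "C \<in> carrier_mat m n" "i < l * m" "j < q * n"
  shows "kron B C $$ (i, j) = B $$ (i div m, j div n) * C $$ (i mod m, j mod n)"
  using assms by (simp add: kron_def)

lemma index_mult_diag_mult_transpose:
  assumes "X \<in> carrier_mat m r" "Z \<in> carrier_mat n r" "a < m" "b < n"
  shows "(X * mat_diag r g * transpose_mat Z) $$ (a, b) = (\<Sum>s<r. X $$ (a, s) * g s * Z $$ (b, s))"
  using assms by (simp add: mat_diag_mult_right[of X m r] scalar_prod_def lessThan_atLeast0)

lemma sq_slice_cp_tensor: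
  assumes "X \<in> carrier_mat m r" "Z \<in> carrier_mat n r"
  shows "sq_slice m n (cp_tensor X Y Z) k = X * mat_diag r (\<lambda>s. Y $$ (k, s)) * transpose_mat Z"
proof (rule eq_matI)
  fix a b assume "a < dim_row (X * mat_diag r (\<lambda>s. Y $$ (k, s)) * transpose_mat Z)"
    and "b < dim_col (X * mat_diag r (\<lambda>s. Y $$ (k, s)) * transpose_mat Z)"
  then have ab: "a < m" "b < n" using assms by simp_all
  show "sq_slice m n (cp_tensor X Y Z) k $$ (a, b)
      = (X * mat_diag r (\<lambda>s. Y $$ (k, s)) * transpose_mat Z) $$ (a, b)"
    using assms ab
    by (subst index_mult_diag_mult_transpose[OF assms ab]) (simp add: sq_slice_def cp_tensor_def)
qed (use assms in \<open>simp_all add: sq_slice_def\<close>)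

lemma mult_diag_mult_transpose_sum:
  assumes "X \<in> carrier_mat m r" "Z \<in> carrier_mat n r"
  shows "X * mat_diag r (\<lambda>s. \<Sum>j\<in>J. c j * g j s) * transpose_mat Z
       = msum m n (\<lambda>j. c j \<cdot>\<^sub>m (X * mat_diag r (g j) * transpose_mat Z)) J"
proof (rule eq_matI)
  fix a b assume "a < dim_row (msum m n (\<lambda>j. c j \<cdot>\<^sub>m (X * mat_diag r (g j) * transpose_mat Z)) J)"
    and "b < dim_col (msum m n (\<lambda>j. c j \<cdot>\<^sub>m (X * mat_diag r (g j) * transpose_mat Z)) J)"
  then have ab: "a < m" "b < n" by simp_all
  have "(X * mat_diag r (\<lambda>s. \<Sum>j\<in>J. c j * g j s) * transpose_mat Z) $$ (a, b)
      = (\<Sum>s<r. X $$ (a, s) * (\<Sum>j\<in>J. c j * g j s) * Z $$ (b, s))"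
    by (rule index_mult_diag_mult_transpose[OF assms ab])
  also have "\<dots> = (\<Sum>j\<in>J. c j * (\<Sum>s<r. X $$ (a, s) * g j s * Z $$ (b, s)))"
    by (simp add: sum_distrib_left sum_distrib_right mult_ac sum.swap[of _ "{..<r}"])
  also have "\<dots> = (\<Sum>j\<in>J. c j * (X * mat_diag r (g j) * transpose_mat Z) $$ (a, b))"
    by (simp only: index_mult_diag_mult_transpose[OF assms ab])
  also have "\<dots> = msum m n (\<lambda>j. c j \<cdot>\<^sub>m (X * mat_diag r (g j) * transpose_mat Z)) J $$ (a, b)"
    using assms ab by simp
  finally show "(X * mat_diag r (\<lambda>s. \<Sum>j\<in>J. c j * g j s) * transpose_mat Z) $$ (a, b)
      = msum m n (\<lambda>j. c j \<cdot>\<^sub>m (X * mat_diag r (g j) * transpose_mat Z)) J $$ (a, b)" .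
qed (use assms in simp_all)

lemma msum_kron_msum_smult:
  assumes "\<And>k. k \<in> K \<Longrightarrow> E k \<in> carrier_mat l q" "\<And>j. j \<in> J \<Longrightarrow> P j \<in> carrier_mat m n"
  shows "msum (l * m) (q * n) (\<lambda>k. kron (E k) (msum m n (\<lambda>j. c k j \<cdot>\<^sub>m P j) J)) K
       = msum (l * m) (q * n) (\<lambda>j. kron (msum l q (\<lambda>k. c k j \<cdot>\<^sub>m E k) K) (P j)) J"
proof (rule eq_matI)
  fix i j' assume "i < dim_row (msum (l * m) (q * n) (\<lambda>j. kron (msum l q (\<lambda>k. c k j \<cdot>\<^sub>m E k) K) (P j)) J)"
    and "j' < dim_col (msum (l * m) (q * n) (\<lambda>j. kron (msum l q (\<lambda>k. c k j \<cdot>\<^sub>m E k) K) (P j)) J)"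
  then have i: "i < l * m" and j': "j' < q * n" by simp_all
  then have "m \<noteq> 0" "n \<noteq> 0" by (metis mult_0_right not_less0)+
  with i j' have blk: "i div m < l" "j' div n < q" "i mod m < m" "j' mod n < n"
    by (auto simp: less_mult_imp_div_less mult.commute)
  have dim_E: "dim_row (E k) = l" "dim_col (E k) = q" if "k \<in> K" for k
    using assms(1)[OF that] by auto
  have dim_P: "dim_row (P j) = m" "dim_col (P j) = n" if "j \<in> J" for j
    using assms(2)[OF that] by auto
  let ?e = "\<lambda>k. E k $$ (i div m, j' div n)" and ?p = "\<lambda>j. P j $$ (i mod m, j' mod n)"
  have "msum (l * m) (q * n) (\<lambda>k. kron (E k) (msum m n (\<lambda>j. c k j \<cdot>\<^sub>m P j) J)) K $$ (i, j')
      = (\<Sum>k\<in>K. ?e k * (\<Sum>j\<in>J. c k j * ?p j))"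
    using assms i j' blk by (auto simp: index_kron[of _ l q _ m n] dim_E dim_P intro!: sum.cong)
  also have "\<dots> = (\<Sum>j\<in>J. (\<Sum>k\<in>K. c k j * ?e k) * ?p j)"
    by (simp add: sum_distrib_left sum_distrib_right mult_ac sum.swap[of _ J])
  also have "\<dots> = msum (l * m) (q * n) (\<lambda>j. kron (msum l q (\<lambda>k. c k j \<cdot>\<^sub>m E k) K) (P j)) J $$ (i, j')"
    using assms i j' blk by (auto simp: index_kron[of _ l q _ m n] dim_E dim_P intro!: sum.cong)
  finally show "msum (l * m) (q * n) (\<lambda>k. kron (E k) (msum m n (\<lambda>j. c k j \<cdot>\<^sub>m P j) J)) K $$ (i, j')
      = msum (l * m) (q * n) (\<lambda>j. kron (msum l q (\<lambda>k. c k j \<cdot>\<^sub>m E k) K) (P j)) J $$ (i, j')" .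
qed simp_all

lemma M_E_cp_tensor_factor:
  assumes "\<And>k. k < p \<Longrightarrow> E k \<in> carrier_mat l q"
    and "X \<in> carrier_mat m r" "Z \<in> carrier_mat n r"
    and "F \<in> carrier_mat p r" "G \<in> carrier_mat r r"
  shows "M_E E p l q m n (cp_tensor X (F * transpose_mat G) Z)
       = msum (l * m) (q * n)
           (\<lambda>j. kron (msum l q (\<lambda>k. F $$ (k, j) \<cdot>\<^sub>m E k) {..<p})
                     (X * mat_diag r (\<lambda>s. col G j $ s) * transpose_mat Z))
           {..<r}"
proof -
  let ?P = "\<lambda>j. X * mat_diag r (\<lambda>s. col G j $ s) * transpose_mat Z"
  have "sq_slice m n (cp_tensor X (F * transpose_mat G) Z) k = msum m n (\<lambda>j. F $$ (k, j) \<cdot>\<^sub>m ?P j) {..<r}"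
    if "k < p" for k
  proof -
    have "mat_diag r (\<lambda>s. (F * transpose_mat G) $$ (k, s))
        = mat_diag r (\<lambda>s. \<Sum>j<r. F $$ (k, j) * col G j $ s)"
      using assms(4,5) that
      by (auto simp: mat_diag_def scalar_prod_def lessThan_atLeast0 mult.commute intro!: sum.cong)
    then show ?thesis
      using assms(2,3) by (simp add: sq_slice_cp_tensor mult_diag_mult_transpose_sum)
  qed
  then have "M_E E p l q m n (cp_tensor X (F * transpose_mat G) Z)
      = msum (l * m) (q * n) (\<lambda>k. kron (E k) (msum m n (\<lambda>j. F $$ (k, j) \<cdot>\<^sub>m ?P j) {..<r})) {..<p}"
    by (auto simp: M_E_def msum_def intro!: sum.cong)
  also have "\<dots> = msum (l * m) (q * n) (\<lambda>j. kron (msum l q (\<lambda>k. F $$ (k, j) \<cdot>\<^sub>m E k) {..<p}) (?P j)) {..<r}"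
    using assms(1-3) by (intro msum_kron_msum_smult) auto
  finally show ?thesis .
qed

text \<open>Only Y = F G^T and the dimensions matter: the identity holds for any family of l x q
  matrices E_k.\<close>

theorem corollary4p2:
  fixes A :: "real mat" and Av :: "nat \<Rightarrow> real mat"
    and l q m n p r :: nat
    and X Y Z F G :: "real mat"
  assumes "A \<in> carrier_mat (l * m) (q * n)"
    and "\<And>k. k < p \<Longrightarrow> Av k \<in> carrier_mat m n"
    and "inj_on Av {..<p}"
    and "{blk A m n i j | i j. i < l \<and> j < q} = Av ` {..<p}"
    and "X \<in> carrier_mat m r" and "Y \<in> carrier_mat p r" and "Z \<in> carrier_mat n r"
    and "F \<in> carrier_mat p r" and "G \<in> carrier_mat r r"
    and "Y = F * transpose_mat G"
  shows "M_E (\<lambda>k. Emat A l q m n (Av k)) p l q m n (cp_tensor X Y Z)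
       = msum (l * m) (q * n)
           (\<lambda>j. kron (msum l q (\<lambda>k. F $$ (k, j) \<cdot>\<^sub>m Emat A l q m n (Av k)) {..<p})
                     (X * mat_diag r (\<lambda>s. col G j $ s) * transpose_mat Z))
           {..<r}"
proof -
  have "Emat A l q m n (Av k) \<in> carrier_mat l q" for k
    by (simp add: Emat_def)
  with assms(5,7-10) show ?thesis
    by (simp add: M_E_cp_tensor_factor)
qed

end
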